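(* Let $G$ be a two-step nilpotent group and let $w_1(x,y)$, $w_2(x,y)$ be group words in two letters such that the map $S\colon G^2\to G^2$, $S(x,y)=(w_1(x,y),w_2(x,y))$, is a solution of the Yang--Baxter equation on $G$. Then the map $S^{Ab}\colon(G^{Ab})^2\to(G^{Ab})^2$, $S^{Ab}(x,y)=(w_1(x,y),w_2(x,y))$ (the same words evaluated in the abelianization $G^{Ab}=G/[G,G]$), is a (verbal) solution of the Yang--Baxter equation on $G^{Ab}$.
   Context: For a nonempty set $X$, a map $S\colon X^2\to X^2$ is a solution of the Yang--Baxter equation on $X$ if $S_1S_2S_1=S_2S_1S_2$ as maps $X^3\to X^3$, where $S_1=S\times\mathrm{Id}$ and $S_2=\mathrm{Id}\times S$. A two-step nilpotent group is a group of nilpotency class at most $2$. A solution is verbal if both of its components are given by evaluating group words. *)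

theory Defs
  imports "HOL-Algebra.Algebra"
begin

datatype gword = LX | LY | WOne | WMul gword gword | WInv gword

primrec eval_word :: "('a, 'b) monoid_scheme \<Rightarrow> 'a \<Rightarrow> 'a \<Rightarrow> gword \<Rightarrow> 'a" where
  "eval_word G x y LX = x"
| "eval_word G x y LY = y"
| "eval_word G x y WOne = \<one>\<^bsub>G\<^esub>"
| "eval_word G x y (WMul u v) = eval_word G x y u \<otimes>\<^bsub>G\<^esub> eval_word G x y v"
| "eval_word G x y (WInv u) = inv\<^bsub>G\<^esub> (eval_word G x y u)"

definition verbal_map :: "('a, 'b) monoid_scheme \<Rightarrow> gword \<Rightarrow> gword \<Rightarrow> 'a \<times> 'a \<Rightarrow> 'a \<times> 'a" where
  "verbal_map G w1 w2 = (\<lambda>(x, y). (eval_word G x y w1, eval_word G x y w2))"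

definition ybe_S1 :: "('a \<times> 'a \<Rightarrow> 'a \<times> 'a) \<Rightarrow> 'a \<times> 'a \<times> 'a \<Rightarrow> 'a \<times> 'a \<times> 'a" where
  "ybe_S1 S = (\<lambda>(x, y, z). (fst (S (x, y)), snd (S (x, y)), z))"

definition ybe_S2 :: "('a \<times> 'a \<Rightarrow> 'a \<times> 'a) \<Rightarrow> 'a \<times> 'a \<times> 'a \<Rightarrow> 'a \<times> 'a \<times> 'a" where
  "ybe_S2 S = (\<lambda>(x, y, z). (x, fst (S (y, z)), snd (S (y, z))))"

definition is_ybe_solution :: "'a set \<Rightarrow> ('a \<times> 'a \<Rightarrow> 'a \<times> 'a) \<Rightarrow> bool" where
  "is_ybe_solution A S \<longleftrightarrow>
     A \<noteq> {} \<and>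
     (\<forall>x\<in>A. \<forall>y\<in>A. fst (S (x, y)) \<in> A \<and> snd (S (x, y)) \<in> A) \<and>
     (\<forall>x\<in>A. \<forall>y\<in>A. \<forall>z\<in>A.
        ybe_S1 S (ybe_S2 S (ybe_S1 S (x, y, z))) = ybe_S2 S (ybe_S1 S (ybe_S2 S (x, y, z))))"

text \<open>Nilpotency class at most 2: the derived subgroup [G,G] is central.\<close>
definition two_step_nilpotent :: "('a, 'b) monoid_scheme \<Rightarrow> bool" where
  "two_step_nilpotent G \<longleftrightarrow> group G \<and>
     (\<forall>c\<in>derived G (carrier G). \<forall>g\<in>carrier G. c \<otimes>\<^bsub>G\<^esub> g = g \<otimes>\<^bsub>G\<^esub> c)"

definition abelianization :: "('a, 'b) monoid_scheme \<Rightarrow> 'a set monoid" where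
  "abelianization G = G Mod (derived G (carrier G))"

end

theory Submission
  imports Defs
begin

text \<open>Group words commute with group homomorphisms, so a verbal solution on \<open>G\<close> is intertwined by
  the projection \<open>G \<rightarrow> G/[G,G]\<close> with the same verbal map on the quotient. Since the projection
  is surjective, the braid relation on \<open>G\<^sup>3\<close> is carried onto \<open>(G/[G,G])\<^sup>3\<close>.\<close>

lemma is_ybe_solution_image:
  assumes sol: "is_ybe_solution A S"
    and surj: "h ` A = B"
    and intertwines: "\<And>x y. x \<in> A \<Longrightarrow> y \<in> A \<Longrightarrow> T (h x, h y) = map_prod h h (S (x, y))"
  shows "is_ybe_solution B T"
proof -
  have closed: "fst (S (x, y)) \<in> A" "snd (S (x, y)) \<in> A" if "x \<in> A" "y \<in> A" for x y
    using sol that by (auto simp: is_ybe_solution_def)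
  have braid_image:
    "ybe_S1 T (ybe_S2 T (ybe_S1 T (h x, h y, h z))) = ybe_S2 T (ybe_S1 T (ybe_S2 T (h x, h y, h z)))"
    if xyz: "x \<in> A" "y \<in> A" "z \<in> A" for x y z
  proof -
    have braid: "ybe_S1 S (ybe_S2 S (ybe_S1 S (x, y, z))) = ybe_S2 S (ybe_S1 S (ybe_S2 S (x, y, z)))"
      using sol xyz by (simp add: is_ybe_solution_def)
    have lhs: "ybe_S1 T (ybe_S2 T (ybe_S1 T (h x, h y, h z)))
             = map_prod h (map_prod h h) (ybe_S1 S (ybe_S2 S (ybe_S1 S (x, y, z))))"
      using xyz by (simp add: ybe_S1_def ybe_S2_def split_beta intertwines closed)
    have rhs: "ybe_S2 T (ybe_S1 T (ybe_S2 T (h x, h y, h z)))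
             = map_prod h (map_prod h h) (ybe_S2 S (ybe_S1 S (ybe_S2 S (x, y, z))))"
      using xyz by (simp add: ybe_S1_def ybe_S2_def split_beta intertwines closed)
    show ?thesis by (simp only: lhs rhs braid)
  qed
  show ?thesis
    unfolding is_ybe_solution_def
  proof (intro conjI ballI)
    show "B \<noteq> {}"
      using sol surj by (auto simp: is_ybe_solution_def)
  next
    fix u v assume "u \<in> B" "v \<in> B"
    with surj obtain x y where "x \<in> A" "y \<in> A" "u = h x" "v = h y" by blast
    then show "fst (T (u, v)) \<in> B" "snd (T (u, v)) \<in> B"
      using closed surj by (auto simp: intertwines)
  next
    fix u v w assume "u \<in> B" "v \<in> B" "w \<in> B"
    with surj obtain x y z where "x \<in> A" "y \<in> A" "z \<in> A" "u = h x" "v = h y" "w = h z"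
      by blast
    then show "ybe_S1 T (ybe_S2 T (ybe_S1 T (u, v, w))) = ybe_S2 T (ybe_S1 T (ybe_S2 T (u, v, w)))"
      by (simp add: braid_image)
  qed
qed

lemma (in group) eval_word_closed:
  "x \<in> carrier G \<Longrightarrow> y \<in> carrier G \<Longrightarrow> eval_word G x y w \<in> carrier G"
  by (induction w) auto

lemma (in group_hom) hom_eval_word:
  assumes "x \<in> carrier G" "y \<in> carrier G"
  shows "h (eval_word G x y w) = eval_word H (h x) (h y) w"
  by (induction w) (simp_all add: assms G.eval_word_closed)

lemma (in group_hom) hom_verbal_map:
  assumes "x \<in> carrier G" "y \<in> carrier G"
  shows "verbal_map H w1 w2 (h x, h y) = map_prod h h (verbal_map G w1 w2 (x, y))"
  by (simp add: verbal_map_def assms hom_eval_word)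

lemma is_ybe_solution_verbal_map_Mod:
  assumes "N \<lhd> G" "is_ybe_solution (carrier G) (verbal_map G w1 w2)"
  shows "is_ybe_solution (carrier (G Mod N)) (verbal_map (G Mod N) w1 w2)"
proof (rule is_ybe_solution_image[OF assms(2)])
  show "(#>\<^bsub>G\<^esub>) N ` carrier G = carrier (G Mod N)"
    by (auto simp: FactGroup_def RCOSETS_def)
  have "group_hom G (G Mod N) ((#>\<^bsub>G\<^esub>) N)"
    using assms(1) by (simp add: group_hom_def group_hom_axioms_def normal.r_coset_hom_Mod
        normal.factorgroup_is_group normal_def subgroup_def)
  then show "verbal_map (G Mod N) w1 w2 (N #>\<^bsub>G\<^esub> x, N #>\<^bsub>G\<^esub> y)
      = map_prod ((#>\<^bsub>G\<^esub>) N) ((#>\<^bsub>G\<^esub>) N) (verbal_map G w1 w2 (x, y))"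
    if "x \<in> carrier G" "y \<in> carrier G" for x y
    using that by (rule group_hom.hom_verbal_map)
qed

theorem proposition5p9:
  fixes G :: "('a, 'b) monoid_scheme" and w1 w2 :: gword
  assumes "two_step_nilpotent G"
    and "is_ybe_solution (carrier G) (verbal_map G w1 w2)"
  shows "is_ybe_solution (carrier (abelianization G)) (verbal_map (abelianization G) w1 w2)"
proof -
  have "group G"
    using assms(1) by (simp add: two_step_nilpotent_def)
  then have "derived G (carrier G) \<lhd> G"
    by (rule group.derived_self_is_normal)
  then show ?thesis
    unfolding abelianization_def using assms(2) by (rule is_ybe_solution_verbal_map_Mod)
qed

end
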